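(* Let $(X,Y)$ be a jointly Gaussian random vector on a probability space $(\Omega,\mathcal F,\mathbb P)$ with standard normal marginals and correlation $c\in[-1,1]$. Then the following are equivalent: (i) $c\ge0$; (ii) $\{\mathbb P_A\times\mathbb P_B: A,B\in\sigma^+(X)\}\subseteq\mathcal P_{X,Y}$; (iii) $\{\mathbb P_A\times\mathbb P_A: A\in\sigma^+(X)\}\subseteq\mathcal P_{X,Y}$.
   Context: $\sigma^+(X)=\{A\in\sigma(X):\mathbb P(A)>0\}$, where $\sigma(X)$ is the $\sigma$-field generated by $X$; for such $A$, $\mathbb P_A=\mathbb P(\cdot\mid A)$ is the conditional probability given $A$. $\mathcal P_{X,Y}$ is the set of all product probability measures $\pi_1\times\pi_2$ on $(\Omega^2,\mathcal F\otimes\mathcal F)$ such that $\iint_{\Omega^2}(X(\omega)-X(\omega'))(Y(\omega)-Y(\omega'))\,\pi_1(\mathrm d\omega)\pi_2(\mathrm d\omega')\ge0$. *)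

theory Defs
  imports "HOL-Probability.Probability"
begin

definition gaussian_law :: "real \<Rightarrow> real \<Rightarrow> real measure" where
  "gaussian_law mu v =
     (if v = 0 then return borel mu else density lborel (normal_density mu (sqrt v)))"

definition gaussian_rv :: "'a measure \<Rightarrow> ('a \<Rightarrow> real) \<Rightarrow> bool" where
  "gaussian_rv M Z \<longleftrightarrow> Z \<in> borel_measurable M \<and>
     (\<exists>mu v. v \<ge> 0 \<and> distr M borel Z = gaussian_law mu v)"

definition jointly_gaussian :: "'a measure \<Rightarrow> ('a \<Rightarrow> real) \<Rightarrow> ('a \<Rightarrow> real) \<Rightarrow> bool" where
  "jointly_gaussian M X Y \<longleftrightarrow>
     X \<in> borel_measurable M \<and> Y \<in> borel_measurable M \<and>
     (\<forall>a b. gaussian_rv M (\<lambda>\<omega>. a * X \<omega> + b * Y \<omega>))"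

definition sigma_plus :: "'a measure \<Rightarrow> ('a \<Rightarrow> real) \<Rightarrow> 'a set set" where
  "sigma_plus M X = {A \<in> sets (vimage_algebra (space M) X borel). measure M A > 0}"

definition cond_measure :: "'a measure \<Rightarrow> 'a set \<Rightarrow> 'a measure" where
  "cond_measure M A = uniform_measure M A"

definition PXY :: "'a measure \<Rightarrow> ('a \<Rightarrow> real) \<Rightarrow> ('a \<Rightarrow> real) \<Rightarrow> ('a \<times> 'a) measure set" where
  "PXY M X Y = {pi1 \<Otimes>\<^sub>M pi2 | pi1 pi2.
      prob_space pi1 \<and> prob_space pi2 \<and> sets pi1 = sets M \<and> sets pi2 = sets M \<and>
      integrable (pi1 \<Otimes>\<^sub>M pi2) (\<lambda>(w, w'). (X w - X w') * (Y w - Y w')) \<and>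
      (\<integral>(w, w'). (X w - X w') * (Y w - Y w') \<partial>(pi1 \<Otimes>\<^sub>M pi2)) \<ge> 0}"

end

(*
  Write W = Y - c X. The pair (X, W) is jointly Gaussian, so for every t the function
  b |-> E exp(i (t X + b W)) = exp(-(t^2 + (1 - c^2) b^2) / 2) has derivative 0 at b = 0,
  that is E[W exp(i t X)] = 0. Splitting W into a difference of two probability densities
  and applying Levy's uniqueness theorem to the laws of X under them upgrades this to
  E[W h(X)] = 0 for every Borel h. Consequently E_A[Y] = c E_A[X] and E_A[X Y] = c E_A[X^2]
  for every A in sigma^+(X), and the double integral under P_A x P_B equals
  c (Var_A X + Var_B X + (E_A X - E_B X)^2). This is nonnegative when c >= 0, while for
  A = B = Omega it equals 2 c.
*)
theory Submission
  imports Defs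
begin

section \<open>Moments and characteristic functions of Gaussian laws\<close>

lemma gaussian_law_mean:
  assumes "v \<ge> 0"
  shows "integrable (gaussian_law mu v) (\<lambda>x. x)" and "(\<integral>x. x \<partial>gaussian_law mu v) = mu"
proof -
  have "integrable (gaussian_law mu v) (\<lambda>x. x) \<and> (\<integral>x. x \<partial>gaussian_law mu v) = mu"
  proof (cases "v = 0")
    case True
    then have "gaussian_law mu v = return borel mu" by (simp add: gaussian_law_def)
    moreover have "integrable (return borel mu) (\<lambda>x::real. x)"
      by (simp add: integrable_iff_bounded nn_integral_return)
    moreover have "(\<integral>x. x \<partial>return borel mu) = mu"
      by (simp add: integral_return)
    ultimately show ?thesis by simp
  next
    case False
    then have s: "sqrt v > 0" using assms by simp
    have "integrable (density lborel (normal_density mu (sqrt v))) (\<lambda>x. x)"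
      using integrable_normal_moment_nz_1[OF s, of mu]
      by (subst integrable_real_density) (auto simp: mult.commute)
    moreover have "(\<integral>x. x \<partial>density lborel (normal_density mu (sqrt v))) = mu"
      using integral_normal_moment_nz_1[OF s, of mu]
      by (subst integral_real_density) (auto simp: mult.commute)
    ultimately show ?thesis using False by (simp add: gaussian_law_def)
  qed
  then show "integrable (gaussian_law mu v) (\<lambda>x. x)" "(\<integral>x. x \<partial>gaussian_law mu v) = mu"
    by blast+
qed

lemma char_normal_density_centered:
  assumes "s > 0"
  shows "char (density lborel (normal_density 0 s)) t = exp (- (s * t)\<^sup>2 / 2)"
proof -
  have "char (density lborel (normal_density 0 s)) t
      = (\<integral>x. normal_density 0 s x *\<^sub>R iexp (t * x) \<partial>lborel)"
    unfolding char_def by (subst integral_density) auto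
  also have "\<dots> = \<bar>s\<bar> *\<^sub>R (\<integral>x. normal_density 0 s (0 + s * x) *\<^sub>R iexp (t * (0 + s * x)) \<partial>lborel)"
    by (rule lborel_integral_real_affine) (use assms in auto)
  also have "\<dots> = (\<integral>x. std_normal_density x *\<^sub>R iexp ((s * t) * x) \<partial>lborel)"
  proof -
    have "\<And>x. \<bar>s\<bar> *\<^sub>R (normal_density 0 s (0 + s * x) *\<^sub>R iexp (t * (0 + s * x)))
        = std_normal_density x *\<^sub>R iexp ((s * t) * x)"
      using assms by (simp add: normal_density_def power_mult_distrib real_sqrt_mult mult_ac)
    then show ?thesis by (simp flip: integral_scaleR_right)
  qed
  also have "\<dots> = char std_normal_distribution (s * t)"
    unfolding char_def by (subst integral_density) auto
  finally show ?thesis by (simp add: char_std_normal_distribution)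
qed

lemma gaussian_law_centered:
  assumes "v \<ge> 0"
  shows "integrable (gaussian_law 0 v) (\<lambda>x. x\<^sup>2)"
    and "(\<integral>x. x\<^sup>2 \<partial>gaussian_law 0 v) = v"
    and "char (gaussian_law 0 v) t = exp (- v * t\<^sup>2 / 2)"
proof -
  have "integrable (gaussian_law 0 v) (\<lambda>x. x\<^sup>2) \<and> (\<integral>x. x\<^sup>2 \<partial>gaussian_law 0 v) = v
      \<and> char (gaussian_law 0 v) t = exp (- v * t\<^sup>2 / 2)"
  proof (cases "v = 0")
    case True
    then have "gaussian_law 0 v = return borel 0" by (simp add: gaussian_law_def)
    moreover have "integrable (return borel (0::real)) (\<lambda>x. x\<^sup>2)"
      by (simp add: integrable_iff_bounded nn_integral_return)
    moreover have "(\<integral>x. x\<^sup>2 \<partial>return borel (0::real)) = 0" "char (return borel 0) t = 1"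
      by (simp_all add: integral_return char_def)
    ultimately show ?thesis using True by simp
  next
    case False
    define s where "s = sqrt v"
    have s: "s > 0" and sv: "s\<^sup>2 = v" using assms False by (auto simp: s_def)
    have "gaussian_law 0 v = density lborel (normal_density 0 s)"
      using False by (simp add: gaussian_law_def s_def)
    moreover have "integrable (density lborel (normal_density 0 s)) (\<lambda>x. x\<^sup>2)"
      using integrable_normal_moment[OF s, of 0 2]
      by (subst integrable_real_density) (auto simp: mult.commute)
    moreover have "(\<integral>x. x\<^sup>2 \<partial>density lborel (normal_density 0 s)) = v"
      using integral_normal_moment_even[OF s, of 0 1] sv
      by (subst integral_real_density) (auto simp: mult.commute)
    moreover have "(s * t)\<^sup>2 = v * t\<^sup>2"
      by (simp add: power_mult_distrib sv)
    ultimately show ?thesis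
      using char_normal_density_centered[OF s, of t] by simp
  qed
  then show "integrable (gaussian_law 0 v) (\<lambda>x. x\<^sup>2)" "(\<integral>x. x\<^sup>2 \<partial>gaussian_law 0 v) = v"
    "char (gaussian_law 0 v) t = exp (- v * t\<^sup>2 / 2)"
    by blast+
qed

lemma centered_gaussian_law_moments:
  fixes U :: "'a \<Rightarrow> real"
  assumes U[measurable]: "U \<in> borel_measurable M"
    and law: "distr M borel U = gaussian_law 0 v" and v: "v \<ge> 0"
  shows "integrable M U" "(\<integral>x. U x \<partial>M) = 0"
    and "integrable M (\<lambda>x. (U x)\<^sup>2)" "(\<integral>x. (U x)\<^sup>2 \<partial>M) = v"
    and "(\<integral>x. iexp (U x) \<partial>M) = exp (- v / 2)"
proof -
  have integrable_iff: "integrable M (\<lambda>x. g (U x)) \<longleftrightarrow> integrable (gaussian_law 0 v) g"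
    and integral_eq: "(\<integral>x. g (U x) \<partial>M) = (\<integral>y. g y \<partial>gaussian_law 0 v)"
    if [measurable]: "g \<in> borel_measurable borel" for g :: "real \<Rightarrow> 'b::{banach, second_countable_topology}"
    using integrable_distr_eq[OF U, of g] integral_distr[OF U, of g] by (simp_all add: law)
  have id: "(\<lambda>x::real. x) \<in> borel_measurable borel" and sq: "(\<lambda>x::real. x\<^sup>2) \<in> borel_measurable borel"
    by simp_all
  show "integrable M U" "(\<integral>x. U x \<partial>M) = 0"
    using gaussian_law_mean[OF v, of 0] integrable_iff[OF id] integral_eq[OF id] by simp_all
  show "integrable M (\<lambda>x. (U x)\<^sup>2)" "(\<integral>x. (U x)\<^sup>2 \<partial>M) = v"
    using gaussian_law_centered(1,2)[OF v] integrable_iff[OF sq] integral_eq[OF sq] by simp_all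
  show "(\<integral>x. iexp (U x) \<partial>M) = exp (- v / 2)"
    using gaussian_law_centered(3)[OF v, of 1] integral_eq[of iexp] by (simp add: char_def)
qed

lemma integral_iexp_centered_gaussian_rv:
  fixes U :: "'a \<Rightarrow> real"
  assumes "gaussian_rv M U" and "(\<integral>x. U x \<partial>M) = 0"
  shows "(\<integral>x. iexp (U x) \<partial>M) = exp (- (\<integral>x. (U x)\<^sup>2 \<partial>M) / 2)"
proof -
  obtain mu v where U: "U \<in> borel_measurable M" and v: "v \<ge> 0"
    and law: "distr M borel U = gaussian_law mu v"
    using assms(1) unfolding gaussian_rv_def by blast
  have "(\<integral>x. U x \<partial>M) = mu"
    using gaussian_law_mean(2)[OF v] integral_distr[OF U, of "\<lambda>x. x"] by (simp add: law)
  then have "distr M borel U = gaussian_law 0 v"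
    using law assms(2) by simp
  with centered_gaussian_law_moments[OF U this v] show ?thesis
    by simp
qed

section \<open>Orthogonality to all functions of a random variable\<close>

lemma cmod_iexp_sub_linear_le: "cmod (iexp y - 1 - \<i> * y) \<le> y\<^sup>2 / 2"
  using iexp_approx1[of y 1] by (simp add: numeral_2_eq_2 power2_abs diff_diff_eq)

lemma (in prob_space) norm_integral_iexp_increment_le:
  fixes X W :: "'a \<Rightarrow> real"
  assumes [measurable]: "X \<in> borel_measurable M" "W \<in> borel_measurable M"
    and W2: "integrable M (\<lambda>x. (W x)\<^sup>2)"
  shows "norm ((\<integral>x. iexp (t * X x + b * W x) \<partial>M) - (\<integral>x. iexp (t * X x) \<partial>M)
      - (\<i> * b) * (\<integral>x. W x *\<^sub>R iexp (t * X x) \<partial>M)) \<le> b\<^sup>2 / 2 * (\<integral>x. (W x)\<^sup>2 \<partial>M)"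
proof -
  define r where "r x = iexp (t * X x) * (iexp (b * W x) - 1 - \<i> * (b * W x))" for x
  have r_eq: "r = (\<lambda>x. iexp (t * X x + b * W x) - iexp (t * X x) - (\<i> * b) * (W x *\<^sub>R iexp (t * X x)))"
    by (simp add: fun_eq_iff r_def algebra_simps scaleR_conv_of_real flip: exp_add)
  have int_iexp: "integrable M (\<lambda>x. iexp (t * X x + b * W x))" "integrable M (\<lambda>x. iexp (t * X x))"
    by (auto intro!: integrable_const_bound[where B=1])
  have "integrable M W"
    by (rule square_integrable_imp_integrable[OF _ W2]) measurable
  then have int_W: "integrable M (\<lambda>x. W x *\<^sub>R iexp (t * X x))"
    by (rule Bochner_Integration.integrable_bound) (auto simp: norm_mult)
  have "integrable M r"
    unfolding r_eq
    by (intro Bochner_Integration.integrable_diff Bochner_Integration.integrable_mult_right int_iexp int_W)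
  have "(\<integral>x. r x \<partial>M) = (\<integral>x. iexp (t * X x + b * W x) \<partial>M) - (\<integral>x. iexp (t * X x) \<partial>M)
      - (\<i> * b) * (\<integral>x. W x *\<^sub>R iexp (t * X x) \<partial>M)"
    unfolding r_eq
    by (simp only: Bochner_Integration.integral_diff[OF Bochner_Integration.integrable_diff[OF int_iexp]
        Bochner_Integration.integrable_mult_right[OF int_W]]
        Bochner_Integration.integral_diff[OF int_iexp] integral_mult_right_zero)
  moreover have "norm (\<integral>x. r x \<partial>M) \<le> (\<integral>x. norm (r x) \<partial>M)"
    by (rule integral_norm_bound)
  moreover have "(\<integral>x. norm (r x) \<partial>M) \<le> (\<integral>x. b\<^sup>2 / 2 * (W x)\<^sup>2 \<partial>M)"
  proof (rule integral_mono)
    show "norm (r x) \<le> b\<^sup>2 / 2 * (W x)\<^sup>2" for x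
      using cmod_iexp_sub_linear_le[of "b * W x"]
      by (simp add: r_def norm_mult power_mult_distrib)
  qed (use W2 \<open>integrable M r\<close> in simp_all)
  ultimately show ?thesis
    by simp
qed

lemma (in prob_space) integral_scaleR_iexp_eq_0_if_flat:
  fixes X W :: "'a \<Rightarrow> real"
  assumes [measurable]: "X \<in> borel_measurable M" "W \<in> borel_measurable M"
    and W2: "integrable M (\<lambda>x. (W x)\<^sup>2)"
    and flat: "\<And>b. b > 0 \<Longrightarrow>
      norm ((\<integral>x. iexp (t * X x + b * W x) \<partial>M) - (\<integral>x. iexp (t * X x) \<partial>M)) \<le> C * b\<^sup>2"
  shows "(\<integral>x. W x *\<^sub>R iexp (t * X x) \<partial>M) = 0"
proof -
  define z where "z = (\<integral>x. W x *\<^sub>R iexp (t * X x) \<partial>M)"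
  define K where "K = C + (\<integral>x. (W x)\<^sup>2 \<partial>M) / 2"
  have z_le: "norm z \<le> K * b" if b: "b > 0" for b
  proof -
    define \<Delta> where "\<Delta> = (\<integral>x. iexp (t * X x + b * W x) \<partial>M) - (\<integral>x. iexp (t * X x) \<partial>M)"
    have "b * norm z = norm (\<Delta> - (\<Delta> - (\<i> * b) * z))"
      using b by (simp add: norm_mult)
    also have "\<dots> \<le> norm \<Delta> + norm (\<Delta> - (\<i> * b) * z)"
      by (rule norm_triangle_ineq4)
    also have "\<dots> \<le> C * b\<^sup>2 + b\<^sup>2 / 2 * (\<integral>x. (W x)\<^sup>2 \<partial>M)"
      using flat[OF b] norm_integral_iexp_increment_le[OF assms(1-3), of t b]
      unfolding \<Delta>_def z_def by (rule add_mono)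
    also have "\<dots> = b * (K * b)"
      by (simp add: K_def power2_eq_square algebra_simps)
    finally show ?thesis
      using b by simp
  qed
  have "norm z \<le> 0 + e" if e: "e > 0" for e
  proof -
    have "norm z \<le> K * (e / (\<bar>K\<bar> + 1))"
      using e by (intro z_le) simp
    also have "\<dots> \<le> \<bar>K\<bar> * (e / (\<bar>K\<bar> + 1))"
      using e by (intro mult_right_mono) auto
    also have "\<dots> \<le> e"
      using e by (simp add: field_simps)
    finally show ?thesis
      by simp
  qed
  then have "norm z \<le> 0"
    by (rule field_le_epsilon)
  then show ?thesis
    by (simp add: z_def)
qed

lemma prob_space_density_of_integral_eq_1:
  fixes f :: "'a \<Rightarrow> real"
  assumes "integrable M f" "\<And>x. x \<in> space M \<Longrightarrow> 0 \<le> f x" "(\<integral>x. f x \<partial>M) = 1"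
  shows "prob_space (density M (\<lambda>x. ennreal (f x)))"
proof (rule prob_spaceI)
  have "emeasure (density M (\<lambda>x. ennreal (f x))) (space M) = (\<integral>\<^sup>+x. ennreal (f x) \<partial>M)"
    using assms(1) by (subst emeasure_density) (auto intro!: nn_integral_cong)
  also have "\<dots> = 1"
    using assms by (subst nn_integral_eq_integral) auto
  finally show "emeasure (density M (\<lambda>x. ennreal (f x))) (space (density M (\<lambda>x. ennreal (f x)))) = 1"
    by simp
qed

lemma integral_distr_density:
  fixes f :: "'a \<Rightarrow> real" and g :: "'b \<Rightarrow> 'c::{banach, second_countable_topology}"
  assumes [measurable]: "f \<in> borel_measurable M" "X \<in> measurable M N" "g \<in> borel_measurable N"
    and "\<And>x. x \<in> space M \<Longrightarrow> 0 \<le> f x"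
  shows "(\<integral>y. g y \<partial>distr (density M (\<lambda>x. ennreal (f x))) N X) = (\<integral>x. f x *\<^sub>R g (X x) \<partial>M)"
proof -
  have "(\<integral>y. g y \<partial>distr (density M (\<lambda>x. ennreal (f x))) N X) = (\<integral>x. g (X x) \<partial>density M (\<lambda>x. ennreal (f x)))"
    by (rule integral_distr) auto
  also have "\<dots> = (\<integral>x. f x *\<^sub>R g (X x) \<partial>M)"
    using assms(4) by (intro integral_density) auto
  finally show ?thesis .
qed

lemma integral_density_comp_eq_if_char_eq:
  fixes f g X :: "'a \<Rightarrow> real" and h :: "real \<Rightarrow> real"
  assumes [measurable]: "f \<in> borel_measurable M" "g \<in> borel_measurable M" "X \<in> borel_measurable M"
      "h \<in> borel_measurable borel"
    and nonneg: "\<And>x. x \<in> space M \<Longrightarrow> 0 \<le> f x" "\<And>x. x \<in> space M \<Longrightarrow> 0 \<le> g x"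
    and prob: "prob_space (density M (\<lambda>x. ennreal (f x)))" "prob_space (density M (\<lambda>x. ennreal (g x)))"
    and char_eq: "\<And>t. (\<integral>x. f x *\<^sub>R iexp (t * X x) \<partial>M) = (\<integral>x. g x *\<^sub>R iexp (t * X x) \<partial>M)"
  shows "(\<integral>x. f x * h (X x) \<partial>M) = (\<integral>x. g x * h (X x) \<partial>M)"
proof -
  let ?Q = "\<lambda>f. distr (density M (\<lambda>x. ennreal (f x))) borel X"
  have "real_distribution (?Q f)" "real_distribution (?Q g)"
    using prob by (auto intro!: prob_space.real_distribution_distr)
  moreover have "char (?Q f) = char (?Q g)"
    using char_eq nonneg by (simp add: fun_eq_iff char_def integral_distr_density)
  ultimately have "?Q f = ?Q g"
    by (rule Levy_uniqueness)
  then show ?thesis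
    using nonneg integral_distr_density[of f M X borel h] integral_distr_density[of g M X borel h] by simp
qed

lemma (in prob_space) mean_zero_density_decomposition:
  fixes W :: "'a \<Rightarrow> real"
  assumes W: "integrable M W" and mean: "(\<integral>x. W x \<partial>M) = 0"
  obtains k f g where "k > 0" "\<And>x. W x = k * (f x - g x)"
    "f \<in> borel_measurable M" "g \<in> borel_measurable M"
    "\<And>x. 0 \<le> f x" "\<And>x. 0 \<le> g x" "\<And>x. k * f x \<le> \<bar>W x\<bar> + 1" "\<And>x. k * g x \<le> \<bar>W x\<bar> + 1"
    "integrable M f" "integrable M g"
    "prob_space (density M (\<lambda>x. ennreal (f x)))" "prob_space (density M (\<lambda>x. ennreal (g x)))"
proof -
  have [measurable]: "W \<in> borel_measurable M"
    using W by (rule borel_measurable_integrable)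
  define p q where "p x = max 0 (W x)" and "q x = max 0 (- W x)" for x
  have [measurable]: "p \<in> borel_measurable M" "q \<in> borel_measurable M"
    unfolding p_def q_def by simp_all
  have int_p: "integrable M p" and int_q: "integrable M q"
    by (auto simp: p_def q_def intro!: Bochner_Integration.integrable_bound[OF W])
  have W_pq: "W x = p x - q x" for x
    by (simp add: p_def q_def)
  define m where "m = (\<integral>x. p x \<partial>M)"
  have "(\<integral>x. q x \<partial>M) = m"
    using mean int_p int_q by (simp add: W_pq m_def)
  have "0 \<le> m"
    unfolding m_def by (rule Bochner_Integration.integral_nonneg) (simp add: p_def)
  \<comment> \<open>Shifting by one keeps the normalising constant positive even when W vanishes a.e.\<close>
  define f g where "f x = (p x + 1) / (m + 1)" and "g x = (q x + 1) / (m + 1)" for x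
  have W_eq: "W x = (m + 1) * (f x - g x)" for x
    using \<open>0 \<le> m\<close> by (simp add: f_def g_def W_pq diff_divide_distrib[symmetric])
  have meas_fg: "f \<in> borel_measurable M" "g \<in> borel_measurable M"
    unfolding f_def g_def by simp_all
  have nonneg: "0 \<le> f x" "0 \<le> g x" for x
    using \<open>0 \<le> m\<close> by (simp_all add: f_def g_def p_def q_def)
  have bound: "(m + 1) * f x \<le> \<bar>W x\<bar> + 1" "(m + 1) * g x \<le> \<bar>W x\<bar> + 1" for x
    using \<open>0 \<le> m\<close> by (simp_all add: f_def g_def p_def q_def)
  have int_fg: "integrable M f" "integrable M g"
    unfolding f_def g_def using int_p int_q by simp_all
  moreover have "(\<integral>x. f x \<partial>M) = 1" "(\<integral>x. g x \<partial>M) = 1"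
    unfolding f_def g_def using int_p int_q \<open>(\<integral>x. q x \<partial>M) = m\<close> \<open>0 \<le> m\<close>
    by (simp_all add: m_def prob_space)
  ultimately have prob: "prob_space (density M (\<lambda>x. ennreal (f x)))" "prob_space (density M (\<lambda>x. ennreal (g x)))"
    using nonneg by (simp_all add: prob_space_density_of_integral_eq_1)
  have "m + 1 > 0"
    using \<open>0 \<le> m\<close> by simp
  from that[OF this W_eq meas_fg nonneg bound int_fg prob] show thesis .
qed

lemma (in prob_space) integral_mult_comp_eq_0_if_orthogonal_iexp:
  fixes W X :: "'a \<Rightarrow> real" and h :: "real \<Rightarrow> real"
  assumes [measurable]: "X \<in> borel_measurable M" "h \<in> borel_measurable borel"
    and W: "integrable M W"
    and orth: "\<And>t. (\<integral>x. W x *\<^sub>R iexp (t * X x) \<partial>M) = 0"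
    and int_h: "integrable M (\<lambda>x. h (X x))" and int_Wh: "integrable M (\<lambda>x. W x * h (X x))"
  shows "(\<integral>x. W x * h (X x) \<partial>M) = 0"
proof -
  have [measurable]: "W \<in> borel_measurable M"
    using W by (rule borel_measurable_integrable)
  have mean: "(\<integral>x. W x \<partial>M) = 0"
    using orth[of 0] by (simp add: scaleR_conv_of_real)
  obtain k f g where "k > 0" and W_eq: "\<And>x. W x = k * (f x - g x)"
    and meas_fg[measurable]: "f \<in> borel_measurable M" "g \<in> borel_measurable M"
    and nonneg: "\<And>x. 0 \<le> f x" "\<And>x. 0 \<le> g x"
    and bound: "\<And>x. k * f x \<le> \<bar>W x\<bar> + 1" "\<And>x. k * g x \<le> \<bar>W x\<bar> + 1"
    and int_fg: "integrable M f" "integrable M g"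
    and prob: "prob_space (density M (\<lambda>x. ennreal (f x)))" "prob_space (density M (\<lambda>x. ennreal (g x)))"
    by (rule mean_zero_density_decomposition[OF W mean]) blast
  have char_eq: "(\<integral>x. f x *\<^sub>R iexp (t * X x) \<partial>M) = (\<integral>x. g x *\<^sub>R iexp (t * X x) \<partial>M)" for t
  proof -
    have "integrable M (\<lambda>x. f x *\<^sub>R iexp (t * X x))" "integrable M (\<lambda>x. g x *\<^sub>R iexp (t * X x))"
      by (rule Bochner_Integration.integrable_bound[OF int_fg(1)]
          Bochner_Integration.integrable_bound[OF int_fg(2)]; simp add: norm_mult)+
    moreover have "(\<integral>x. (f x - g x) *\<^sub>R iexp (t * X x) \<partial>M) = 0"
      using orth[of t] \<open>k > 0\<close> by (simp add: W_eq scaleR_scaleR[symmetric] del: scaleR_scaleR)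
    ultimately show ?thesis
      by (simp add: scaleR_diff_left)
  qed
  have "(\<integral>x. f x * h (X x) \<partial>M) = (\<integral>x. g x * h (X x) \<partial>M)"
    using nonneg prob char_eq by (intro integral_density_comp_eq_if_char_eq[where X=X]) auto
  moreover have "integrable M (\<lambda>x. f x * h (X x))" "integrable M (\<lambda>x. g x * h (X x))"
  proof -
    have scaled_le: "\<bar>a * y\<bar> \<le> (\<bar>w * y\<bar> + \<bar>y\<bar>) / k" if "0 \<le> a" "k * a \<le> \<bar>w\<bar> + 1" for a w y
      using mult_right_mono[OF that(2) abs_ge_zero[of y]] that(1) \<open>k > 0\<close>
      by (simp add: abs_mult pos_le_divide_eq algebra_simps)
    have int_bd: "integrable M (\<lambda>x. (\<bar>W x * h (X x)\<bar> + \<bar>h (X x)\<bar>) / k)"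
      using int_Wh int_h by simp
    have le: "AE x in M. norm (f x * h (X x)) \<le> norm ((\<bar>W x * h (X x)\<bar> + \<bar>h (X x)\<bar>) / k)"
      "AE x in M. norm (g x * h (X x)) \<le> norm ((\<bar>W x * h (X x)\<bar> + \<bar>h (X x)\<bar>) / k)"
      using scaled_le[OF nonneg(1) bound(1)] scaled_le[OF nonneg(2) bound(2)] \<open>k > 0\<close>
      by auto
    show "integrable M (\<lambda>x. f x * h (X x))" "integrable M (\<lambda>x. g x * h (X x))"
      by (rule Bochner_Integration.integrable_bound[OF int_bd _ le(1)]
          Bochner_Integration.integrable_bound[OF int_bd _ le(2)]; measurable)+
  qed
  ultimately have "(\<integral>x. (f x - g x) * h (X x) \<partial>M) = 0"
    by (simp add: left_diff_distrib)
  then show ?thesis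
    by (simp add: W_eq mult.assoc)
qed

section \<open>Conditional probabilities and product integrals\<close>

lemma
  fixes f :: "'a \<Rightarrow> real"
  assumes A: "A \<in> sets M" "emeasure M A \<noteq> 0" "emeasure M A \<noteq> \<infinity>" and f: "integrable M f"
  shows integrable_uniform_measure: "integrable (uniform_measure M A) f"
    and integral_uniform_measure: "(\<integral>x. f x \<partial>uniform_measure M A) = (\<integral>x\<in>A. f x \<partial>M) / measure M A"
proof -
  have em: "emeasure M A = ennreal (measure M A)"
    using A(3) by (simp add: emeasure_eq_ennreal_measure)
  then have "0 < measure M A"
    using A(2) measure_nonneg[of M A] by (auto simp: order_less_le)
  have [measurable]: "A \<in> sets M" and fm[measurable]: "f \<in> borel_measurable M"
    using A(1) f by simp_all
  have density_eq: "uniform_measure M A = density M (\<lambda>x. ennreal (indicator A x / measure M A))"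
    unfolding uniform_measure_def
  proof (rule density_cong)
    show "AE x in M. indicator A x / emeasure M A = ennreal (indicator A x / measure M A)"
      using divide_ennreal[of 1 "measure M A"] \<open>0 < measure M A\<close>
      by (intro AE_I2) (simp add: em split: split_indicator)
  qed measurable
  have eq: "(\<lambda>x. indicator A x / measure M A * f x) = (\<lambda>x. (indicator A x *\<^sub>R f x) / measure M A)"
    by auto
  have dens: "(\<lambda>x. indicator A x / measure M A) \<in> borel_measurable M"
      "AE x in M. 0 \<le> indicator A x / measure M A"
    by simp_all
  show "integrable (uniform_measure M A) f"
    unfolding density_eq integrable_real_density[OF dens fm] eq
    using integrable_mult_indicator[OF A(1) f] by simp
  show "(\<integral>x. f x \<partial>uniform_measure M A) = (\<integral>x\<in>A. f x \<partial>M) / measure M A"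
    unfolding density_eq integral_real_density[OF dens fm] eq set_lebesgue_integral_def
    by simp
qed

lemma (in pair_sigma_finite) integrable_product_mult:
  fixes f g :: "_ \<Rightarrow> real"
  assumes f: "integrable M1 f" and g: "integrable M2 g"
  shows "integrable (M1 \<Otimes>\<^sub>M M2) (\<lambda>z. f (fst z) * g (snd z))"
proof (rule Fubini_integrable)
  have [measurable]: "f \<in> borel_measurable M1" "g \<in> borel_measurable M2"
    using f g by simp_all
  show "(\<lambda>z. f (fst z) * g (snd z)) \<in> borel_measurable (M1 \<Otimes>\<^sub>M M2)"
    by measurable
  show "integrable M1 (\<lambda>x. \<integral>y. norm (f (fst (x, y)) * g (snd (x, y))) \<partial>M2)"
    using f by (simp add: abs_mult)
  show "AE x in M1. integrable M2 (\<lambda>y. f (fst (x, y)) * g (snd (x, y)))"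
    using g by simp
qed

lemma (in pair_sigma_finite) integral_product_mult:
  fixes f g :: "_ \<Rightarrow> real"
  assumes "integrable M1 f" and "integrable M2 g"
  shows "(\<integral>z. f (fst z) * g (snd z) \<partial>(M1 \<Otimes>\<^sub>M M2)) = (\<integral>x. f x \<partial>M1) * (\<integral>y. g y \<partial>M2)"
  using integral_fst'[OF integrable_product_mult[OF assms]] by simp

lemma integral_pair_diff_mult_diff:
  fixes X Y :: "'a \<Rightarrow> real"
  assumes "prob_space P" "prob_space Q"
    and "integrable P X" "integrable P Y" "integrable P (\<lambda>x. X x * Y x)"
    and "integrable Q X" "integrable Q Y" "integrable Q (\<lambda>x. X x * Y x)"
  shows "integrable (P \<Otimes>\<^sub>M Q) (\<lambda>(w, w'). (X w - X w') * (Y w - Y w'))"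
    and "(\<integral>(w, w'). (X w - X w') * (Y w - Y w') \<partial>(P \<Otimes>\<^sub>M Q))
      = (\<integral>x. X x * Y x \<partial>P) - (\<integral>x. X x \<partial>P) * (\<integral>x. Y x \<partial>Q)
        - (\<integral>x. Y x \<partial>P) * (\<integral>x. X x \<partial>Q) + (\<integral>x. X x * Y x \<partial>Q)"
proof -
  interpret P: prob_space P by fact
  interpret Q: prob_space Q by fact
  interpret pair_sigma_finite P Q
    by unfold_locales
  have one: "integrable P (\<lambda>_. 1::real)" "integrable Q (\<lambda>_. 1::real)"
    by simp_all
  have expand: "(\<lambda>(w, w'). (X w - X w') * (Y w - Y w')) =
    (\<lambda>z. X (fst z) * Y (fst z) - X (fst z) * Y (snd z) - Y (fst z) * X (snd z) + X (snd z) * Y (snd z))"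
    by (auto simp: fun_eq_iff algebra_simps)
  have int: "integrable (P \<Otimes>\<^sub>M Q) (\<lambda>z. X (fst z) * Y (fst z))"
    "integrable (P \<Otimes>\<^sub>M Q) (\<lambda>z. X (fst z) * Y (snd z))"
    "integrable (P \<Otimes>\<^sub>M Q) (\<lambda>z. Y (fst z) * X (snd z))"
    "integrable (P \<Otimes>\<^sub>M Q) (\<lambda>z. X (snd z) * Y (snd z))"
    using integrable_product_mult[OF assms(5) one(2)] integrable_product_mult[OF assms(3,7)]
      integrable_product_mult[OF assms(4,6)] integrable_product_mult[OF one(1) assms(8)]
    by simp_all
  have integral: "(\<integral>z. X (fst z) * Y (fst z) \<partial>(P \<Otimes>\<^sub>M Q)) = (\<integral>x. X x * Y x \<partial>P)"
    "(\<integral>z. X (fst z) * Y (snd z) \<partial>(P \<Otimes>\<^sub>M Q)) = (\<integral>x. X x \<partial>P) * (\<integral>x. Y x \<partial>Q)"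
    "(\<integral>z. Y (fst z) * X (snd z) \<partial>(P \<Otimes>\<^sub>M Q)) = (\<integral>x. Y x \<partial>P) * (\<integral>x. X x \<partial>Q)"
    "(\<integral>z. X (snd z) * Y (snd z) \<partial>(P \<Otimes>\<^sub>M Q)) = (\<integral>x. X x * Y x \<partial>Q)"
    using integral_product_mult[OF assms(5) one(2)] integral_product_mult[OF assms(3,7)]
      integral_product_mult[OF assms(4,6)] integral_product_mult[OF one(1) assms(8)]
    by (simp_all add: P.prob_space Q.prob_space)
  show "integrable (P \<Otimes>\<^sub>M Q) (\<lambda>(w, w'). (X w - X w') * (Y w - Y w'))"
    unfolding expand using int by simp
  show "(\<integral>(w, w'). (X w - X w') * (Y w - Y w') \<partial>(P \<Otimes>\<^sub>M Q))
      = (\<integral>x. X x * Y x \<partial>P) - (\<integral>x. X x \<partial>P) * (\<integral>x. Y x \<partial>Q)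
        - (\<integral>x. Y x \<partial>P) * (\<integral>x. X x \<partial>Q) + (\<integral>x. X x * Y x \<partial>Q)"
    unfolding expand using int by (simp add: integral)
qed

lemma (in prob_space) uniform_measure_space_eq: "uniform_measure M (space M) = M"
proof -
  have "uniform_measure M (space M) = density M (\<lambda>_. 1)"
    unfolding uniform_measure_def by (rule density_cong) (auto simp: emeasure_space_1)
  then show ?thesis
    by (simp add: density_1)
qed

lemma (in prob_space) space_in_sigma_plus: "space M \<in> sigma_plus M X"
proof -
  have "X -` UNIV \<inter> space M \<in> sets (vimage_algebra (space M) X borel)"
    by (rule in_vimage_algebra) simp
  then show ?thesis
    by (simp add: sigma_plus_def prob_space)
qed

lemma sets_vimage_algebra_borel:
  "sets (vimage_algebra (space M) X borel) = {X -` B \<inter> space M |B. B \<in> sets borel}"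
  by (rule sets_vimage_algebra2) simp

lemma (in prob_space) sigma_plus_D:
  assumes "X \<in> borel_measurable M" "A \<in> sigma_plus M X"
  shows "A \<in> sets M" "emeasure M A \<noteq> 0" "emeasure M A \<noteq> \<infinity>"
  using assms by (auto simp: sigma_plus_def sets_vimage_algebra_borel emeasure_eq_measure)

section \<open>Standard Gaussian pairs\<close>

lemma abs_exp_diff_le_nonpos:
  fixes x y :: real
  assumes "x \<le> 0" "y \<le> 0"
  shows "\<bar>exp x - exp y\<bar> \<le> \<bar>x - y\<bar>"
proof -
  have "exp b - exp a \<le> b - a" if "a \<le> b" "b \<le> 0" for a b :: real
  proof -
    have "exp b - exp a = exp b * (1 - exp (a - b))"
      by (simp add: algebra_simps flip: exp_add)
    also have "\<dots> \<le> 1 * (b - a)"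
    proof (rule mult_mono)
      show "1 - exp (a - b) \<le> b - a"
        using exp_ge_add_one_self[of "a - b"] by linarith
    qed (use that in simp_all)
    finally show ?thesis by simp
  qed
  from this[of x y] this[of y x] assms show ?thesis by (cases "x \<le> y") auto
qed

locale std_gaussian_pair = prob_space M for M :: "'a measure" +
  fixes X Y :: "'a \<Rightarrow> real" and c :: real
  assumes jointly_gaussian: "jointly_gaussian M X Y"
    and law_X: "distr M borel X = gaussian_law 0 1"
    and law_Y: "distr M borel Y = gaussian_law 0 1"
    and correlation: "(\<integral>\<omega>. X \<omega> * Y \<omega> \<partial>M) = c"
begin

lemma measurable_X [measurable]: "X \<in> borel_measurable M"
  and measurable_Y [measurable]: "Y \<in> borel_measurable M"
  using jointly_gaussian by (simp_all add: jointly_gaussian_def)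

lemmas moments_X = centered_gaussian_law_moments[OF measurable_X law_X, simplified]
lemmas moments_Y = centered_gaussian_law_moments[OF measurable_Y law_Y, simplified]

lemma integrable_XY: "integrable M (\<lambda>x. X x * Y x)"
proof (rule Bochner_Integration.integrable_bound)
  show "integrable M (\<lambda>x. (X x)\<^sup>2 + (Y x)\<^sup>2)"
    using moments_X moments_Y by simp
  have "\<bar>X x * Y x\<bar> \<le> (X x)\<^sup>2 + (Y x)\<^sup>2" for x
    using sum_squares_bound[of "\<bar>X x\<bar>" "\<bar>Y x\<bar>"] mult_nonneg_nonneg[OF abs_ge_zero abs_ge_zero, of "X x" "Y x"]
    unfolding abs_mult power2_eq_square by linarith
  then show "AE x in M. norm (X x * Y x) \<le> norm ((X x)\<^sup>2 + (Y x)\<^sup>2)"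
    by simp
qed simp

lemma char_linear_combination:
  "(\<integral>x. iexp (a * X x + b * Y x) \<partial>M) = exp (- (a\<^sup>2 + 2 * a * b * c + b\<^sup>2) / 2)"
proof -
  have gaussian: "gaussian_rv M (\<lambda>x. a * X x + b * Y x)"
    using jointly_gaussian by (simp add: jointly_gaussian_def)
  have "(\<lambda>x. (a * X x + b * Y x)\<^sup>2) = (\<lambda>x. a\<^sup>2 * (X x)\<^sup>2 + (2 * a * b) * (X x * Y x) + b\<^sup>2 * (Y x)\<^sup>2)"
    by (simp add: fun_eq_iff power2_eq_square algebra_simps)
  then have "(\<integral>x. (a * X x + b * Y x)\<^sup>2 \<partial>M) = a\<^sup>2 + 2 * a * b * c + b\<^sup>2"
    using moments_X moments_Y integrable_XY correlation by simp
  then show ?thesis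
    using integral_iexp_centered_gaussian_rv[OF gaussian] moments_X moments_Y by simp
qed

lemma residual_second_moment:
  shows "integrable M (\<lambda>x. (Y x - c * X x)\<^sup>2)" and "(\<integral>x. (Y x - c * X x)\<^sup>2 \<partial>M) = 1 - c\<^sup>2"
proof -
  have expand: "(\<lambda>x. (Y x - c * X x)\<^sup>2) = (\<lambda>x. (Y x)\<^sup>2 - (2 * c) * (X x * Y x) + c\<^sup>2 * (X x)\<^sup>2)"
    by (simp add: fun_eq_iff power2_eq_square algebra_simps)
  show "integrable M (\<lambda>x. (Y x - c * X x)\<^sup>2)"
    unfolding expand using moments_X moments_Y integrable_XY by simp
  show "(\<integral>x. (Y x - c * X x)\<^sup>2 \<partial>M) = 1 - c\<^sup>2"
    unfolding expand using moments_X moments_Y integrable_XY correlation by (simp add: power2_eq_square)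
qed

lemma correlation_bound: "c\<^sup>2 \<le> 1"
  using Bochner_Integration.integral_nonneg[of M "\<lambda>x. (Y x - c * X x)\<^sup>2"] residual_second_moment by simp

lemma integral_residual_scaleR_iexp_eq_0: "(\<integral>x. (Y x - c * X x) *\<^sub>R iexp (t * X x) \<partial>M) = 0"
proof (rule integral_scaleR_iexp_eq_0_if_flat[where C = "(1 - c\<^sup>2) / 2"])
  show "integrable M (\<lambda>x. (Y x - c * X x)\<^sup>2)"
    by (rule residual_second_moment)
  fix b :: real
  have "(\<integral>x. iexp (t * X x + b * (Y x - c * X x)) \<partial>M) = exp (- (t\<^sup>2 + b\<^sup>2 * (1 - c\<^sup>2)) / 2)"
    using char_linear_combination[of "t - b * c" b]
    by (simp add: algebra_simps power2_eq_square)
  moreover have "(\<integral>x. iexp (t * X x) \<partial>M) = exp (- t\<^sup>2 / 2)"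
    using char_linear_combination[of t 0] by simp
  moreover have "\<bar>exp (- (t\<^sup>2 + b\<^sup>2 * (1 - c\<^sup>2)) / 2) - exp (- t\<^sup>2 / 2)\<bar> \<le> (1 - c\<^sup>2) / 2 * b\<^sup>2"
  proof -
    have "0 \<le> 1 - c\<^sup>2"
      using correlation_bound by simp
    then have "0 \<le> t\<^sup>2 + b\<^sup>2 * (1 - c\<^sup>2)"
      by (simp add: add_nonneg_nonneg)
    then have "- (t\<^sup>2 + b\<^sup>2 * (1 - c\<^sup>2)) / 2 \<le> 0"
      by simp
    then have "\<bar>exp (- (t\<^sup>2 + b\<^sup>2 * (1 - c\<^sup>2)) / 2) - exp (- t\<^sup>2 / 2)\<bar>
        \<le> \<bar>- (t\<^sup>2 + b\<^sup>2 * (1 - c\<^sup>2)) / 2 - (- t\<^sup>2 / 2)\<bar>"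
      by (rule abs_exp_diff_le_nonpos) simp
    also have "\<dots> = \<bar>(1 - c\<^sup>2) / 2 * b\<^sup>2\<bar>"
      by (simp add: field_simps)
    also have "\<dots> = (1 - c\<^sup>2) / 2 * b\<^sup>2"
      using \<open>0 \<le> 1 - c\<^sup>2\<close> by simp
    finally show ?thesis .
  qed
  ultimately show "norm ((\<integral>x. iexp (t * X x + b * (Y x - c * X x)) \<partial>M) - (\<integral>x. iexp (t * X x) \<partial>M))
      \<le> (1 - c\<^sup>2) / 2 * b\<^sup>2"
    by (simp flip: of_real_diff)
qed simp_all

lemma integral_residual_mult_comp_eq_0:
  assumes "h \<in> borel_measurable borel"
    and "integrable M (\<lambda>x. h (X x))" "integrable M (\<lambda>x. (Y x - c * X x) * h (X x))"
  shows "(\<integral>x. (Y x - c * X x) * h (X x) \<partial>M) = 0"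
proof (rule integral_mult_comp_eq_0_if_orthogonal_iexp[OF measurable_X assms(1) _ integral_residual_scaleR_iexp_eq_0])
  show "integrable M (\<lambda>x. Y x - c * X x)"
    using moments_X moments_Y by simp
qed (use assms in simp_all)

lemma set_integral_regression:
  assumes "A \<in> sets (vimage_algebra (space M) X borel)"
  shows "(\<integral>x\<in>A. Y x \<partial>M) = c * (\<integral>x\<in>A. X x \<partial>M)"
    and "(\<integral>x\<in>A. X x * Y x \<partial>M) = c * (\<integral>x\<in>A. (X x)\<^sup>2 \<partial>M)"
proof -
  obtain B where [measurable]: "B \<in> sets borel" and A: "A = X -` B \<inter> space M"
    using assms by (auto simp: sets_vimage_algebra_borel)
  have "A \<in> sets M"
    unfolding A by measurable
  have ind: "indicator A x = (indicator B (X x) :: real)" if "x \<in> space M" for x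
    using that by (simp add: A split: split_indicator)
  have int_A: "integrable M (\<lambda>x. indicator A x * f x)" if "integrable M f" for f :: "'a \<Rightarrow> real"
    using integrable_mult_indicator[OF \<open>A \<in> sets M\<close> that] by simp
  have int_W: "integrable M (\<lambda>x. Y x - c * X x)" "integrable M (\<lambda>x. (Y x - c * X x) * X x)"
    using moments_X moments_Y integrable_XY by (simp_all add: algebra_simps power2_eq_square)
  have "(\<integral>x. (Y x - c * X x) * indicator B (X x) \<partial>M) = 0"
  proof (rule integral_residual_mult_comp_eq_0)
    show "integrable M (\<lambda>x. indicator B (X x) :: real)"
      by (rule integrable_const_bound[where B=1]) (auto split: split_indicator)
    show "integrable M (\<lambda>x. (Y x - c * X x) * indicator B (X x))"
      by (rule Bochner_Integration.integrable_bound[OF int_W(1)]) (auto split: split_indicator)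
  qed simp
  moreover have "(\<integral>x. (Y x - c * X x) * indicator B (X x) \<partial>M)
      = (\<integral>x. indicator A x * Y x - c * (indicator A x * X x) \<partial>M)"
    by (rule Bochner_Integration.integral_cong) (simp_all add: ind algebra_simps)
  ultimately show "(\<integral>x\<in>A. Y x \<partial>M) = c * (\<integral>x\<in>A. X x \<partial>M)"
    using int_A moments_X moments_Y by (simp add: set_lebesgue_integral_def)
  have "(\<integral>x. (Y x - c * X x) * (X x * indicator B (X x)) \<partial>M) = 0"
  proof (rule integral_residual_mult_comp_eq_0)
    show "integrable M (\<lambda>x. X x * indicator B (X x))"
      by (rule Bochner_Integration.integrable_bound[OF moments_X(1)]) (auto split: split_indicator)
    show "integrable M (\<lambda>x. (Y x - c * X x) * (X x * indicator B (X x)))"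
      by (rule Bochner_Integration.integrable_bound[OF int_W(2)]) (auto split: split_indicator)
  qed simp
  moreover have "(\<integral>x. (Y x - c * X x) * (X x * indicator B (X x)) \<partial>M)
      = (\<integral>x. indicator A x * (X x * Y x) - c * (indicator A x * (X x)\<^sup>2) \<partial>M)"
    by (rule Bochner_Integration.integral_cong) (simp_all add: ind algebra_simps power2_eq_square)
  ultimately show "(\<integral>x\<in>A. X x * Y x \<partial>M) = c * (\<integral>x\<in>A. (X x)\<^sup>2 \<partial>M)"
    using int_A moments_X integrable_XY by (simp add: set_lebesgue_integral_def)
qed

lemma cond_measure_moments:
  assumes "A \<in> sigma_plus M X"
  shows "prob_space (cond_measure M A)"
    and "integrable (cond_measure M A) X" "integrable (cond_measure M A) Y"
    and "integrable (cond_measure M A) (\<lambda>x. X x * Y x)" "integrable (cond_measure M A) (\<lambda>x. (X x)\<^sup>2)"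
    and "(\<integral>x. Y x \<partial>cond_measure M A) = c * (\<integral>x. X x \<partial>cond_measure M A)"
    and "(\<integral>x. X x * Y x \<partial>cond_measure M A) = c * (\<integral>x. (X x)\<^sup>2 \<partial>cond_measure M A)"
proof -
  note A = sigma_plus_D[OF measurable_X assms]
  show "prob_space (cond_measure M A)"
    unfolding cond_measure_def using A(2,3) by (rule prob_space_uniform_measure)
  show "integrable (cond_measure M A) X" "integrable (cond_measure M A) Y"
    "integrable (cond_measure M A) (\<lambda>x. X x * Y x)" "integrable (cond_measure M A) (\<lambda>x. (X x)\<^sup>2)"
    unfolding cond_measure_def using moments_X moments_Y integrable_XY
    by (simp_all add: integrable_uniform_measure[OF A])
  have "A \<in> sets (vimage_algebra (space M) X borel)"
    using assms by (simp add: sigma_plus_def)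
  from set_integral_regression[OF this]
  show "(\<integral>x. Y x \<partial>cond_measure M A) = c * (\<integral>x. X x \<partial>cond_measure M A)"
    "(\<integral>x. X x * Y x \<partial>cond_measure M A) = c * (\<integral>x. (X x)\<^sup>2 \<partial>cond_measure M A)"
    unfolding cond_measure_def using moments_X moments_Y integrable_XY
    by (simp_all add: integral_uniform_measure[OF A])
qed

lemma integral_cond_measure_pair:
  assumes A: "A \<in> sigma_plus M X" and B: "B \<in> sigma_plus M X"
  defines "P \<equiv> cond_measure M A" and "Q \<equiv> cond_measure M B"
  shows "integrable (P \<Otimes>\<^sub>M Q) (\<lambda>(w, w'). (X w - X w') * (Y w - Y w'))"
    and "(\<integral>(w, w'). (X w - X w') * (Y w - Y w') \<partial>(P \<Otimes>\<^sub>M Q))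
      = c * (prob_space.variance P X + prob_space.variance Q X + ((\<integral>x. X x \<partial>P) - (\<integral>x. X x \<partial>Q))\<^sup>2)"
proof -
  note P = cond_measure_moments[OF A, folded P_def] and Q = cond_measure_moments[OF B, folded Q_def]
  note pair = integral_pair_diff_mult_diff[OF P(1) Q(1) P(2,3,4) Q(2,3,4)]
  show "integrable (P \<Otimes>\<^sub>M Q) (\<lambda>(w, w'). (X w - X w') * (Y w - Y w'))"
    by (rule pair(1))
  show "(\<integral>(w, w'). (X w - X w') * (Y w - Y w') \<partial>(P \<Otimes>\<^sub>M Q))
      = c * (prob_space.variance P X + prob_space.variance Q X + ((\<integral>x. X x \<partial>P) - (\<integral>x. X x \<partial>Q))\<^sup>2)"
    unfolding pair(2) P(6,7) Q(6,7) prob_space.variance_eq[OF P(1,2,5)] prob_space.variance_eq[OF Q(1,2,5)]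
    by (simp add: power2_eq_square algebra_simps)
qed

lemma cond_measure_pair_in_PXY:
  assumes "c \<ge> 0" and A: "A \<in> sigma_plus M X" and B: "B \<in> sigma_plus M X"
  shows "cond_measure M A \<Otimes>\<^sub>M cond_measure M B \<in> PXY M X Y"
proof -
  have "0 \<le> prob_space.variance (cond_measure M A) X" "0 \<le> prob_space.variance (cond_measure M B) X"
    using cond_measure_moments(1)[OF A] cond_measure_moments(1)[OF B] by (simp_all add: prob_space.variance_positive)
  then have "0 \<le> (\<integral>(w, w'). (X w - X w') * (Y w - Y w') \<partial>(cond_measure M A \<Otimes>\<^sub>M cond_measure M B))"
    using \<open>c \<ge> 0\<close> by (simp add: integral_cond_measure_pair(2)[OF A B])
  moreover have "sets (cond_measure M A) = sets M" "sets (cond_measure M B) = sets M"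
    by (simp_all add: cond_measure_def)
  ultimately show ?thesis
    using cond_measure_moments(1)[OF A] cond_measure_moments(1)[OF B] integral_cond_measure_pair(1)[OF A B]
    unfolding PXY_def by blast
qed

lemma cond_measure_space_pair_notin_PXY:
  assumes "c < 0"
  shows "cond_measure M (space M) \<Otimes>\<^sub>M cond_measure M (space M) \<notin> PXY M X Y"
proof
  assume "cond_measure M (space M) \<Otimes>\<^sub>M cond_measure M (space M) \<in> PXY M X Y"
  then have "0 \<le> (\<integral>(w, w'). (X w - X w') * (Y w - Y w') \<partial>(cond_measure M (space M) \<Otimes>\<^sub>M cond_measure M (space M)))"
    unfolding PXY_def by auto
  also have "\<dots> = 2 * c"
    using integral_cond_measure_pair(2)[OF space_in_sigma_plus space_in_sigma_plus] moments_X
    by (simp add: cond_measure_def uniform_measure_space_eq variance_eq)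
  finally show False
    using \<open>c < 0\<close> by simp
qed

end

theorem proposition4p1:
  fixes M :: "'a measure" and X Y :: "'a \<Rightarrow> real" and c :: real
  assumes "prob_space M"
    and "jointly_gaussian M X Y"
    and "distr M borel X = gaussian_law 0 1"
    and "distr M borel Y = gaussian_law 0 1"
    and "c \<in> {-1..1}"
    and "integral\<^sup>L M (\<lambda>\<omega>. X \<omega> * Y \<omega>) = c"
  shows "(c \<ge> 0 \<longleftrightarrow>
           {cond_measure M A \<Otimes>\<^sub>M cond_measure M B | A B. A \<in> sigma_plus M X \<and> B \<in> sigma_plus M X}
             \<subseteq> PXY M X Y)
       \<and> (c \<ge> 0 \<longleftrightarrow>
           {cond_measure M A \<Otimes>\<^sub>M cond_measure M A | A. A \<in> sigma_plus M X} \<subseteq> PXY M X Y)"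
proof -
  interpret std_gaussian_pair M X Y c
    using assms(1-4,6) by (simp add: std_gaussian_pair_def std_gaussian_pair_axioms_def)
  show ?thesis
  proof (cases "c \<ge> 0")
    case True
    have "{cond_measure M A \<Otimes>\<^sub>M cond_measure M B | A B. A \<in> sigma_plus M X \<and> B \<in> sigma_plus M X}
        \<subseteq> PXY M X Y"
      using cond_measure_pair_in_PXY[OF True] by blast
    moreover have "{cond_measure M A \<Otimes>\<^sub>M cond_measure M A | A. A \<in> sigma_plus M X} \<subseteq> PXY M X Y"
      using cond_measure_pair_in_PXY[OF True] by blast
    ultimately show ?thesis
      using True by simp
  next
    case False
    let ?\<Omega> = "cond_measure M (space M) \<Otimes>\<^sub>M cond_measure M (space M)"
    have "?\<Omega> \<in> {cond_measure M A \<Otimes>\<^sub>M cond_measure M B | A B. A \<in> sigma_plus M X \<and> B \<in> sigma_plus M X}"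
      "?\<Omega> \<in> {cond_measure M A \<Otimes>\<^sub>M cond_measure M A | A. A \<in> sigma_plus M X}"
      using space_in_sigma_plus by blast+
    moreover have "?\<Omega> \<notin> PXY M X Y"
      using False by (intro cond_measure_space_pair_notin_PXY) simp
    ultimately show ?thesis
      using False by blast
  qed
qed

end
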